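(* $\{1,2,4\}\in\mathcal{I}\setminus\mathcal{I}_1$.
   Context: For a summable sequence $\mathbf{x}=(x_n)$ of positive reals, $\mathcal{A}(\mathbf{x})=\{\sum_{n\in A}x_n: A\subseteq\mathbb{N}\}$ is its achievement set and its cardinal function $f$ assigns to $x\in\mathcal{A}(\mathbf{x})$ the cardinality (a positive integer, $\omega$, or $\mathfrak{c}$) of $\{(\varepsilon_n)\in\{0,1\}^{\mathbb{N}}:\sum\varepsilon_nx_n=x\}$. $\mathcal{I}$ is the family of ranges of cardinal functions of such sequences whose achievement set is a finite union of (nondegenerate) closed intervals; $\mathcal{I}_1$ is the family of ranges of cardinal functions of such sequences whose achievement set is a single closed interval. *)

theory Defs
  imports "HOL-Analysis.Analysis"
begin

datatype cval = CFin nat | COmega | CCont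

definition cardval :: "'a set \<Rightarrow> cval" where
  "cardval S = (if finite S then CFin (card S) else if countable S then COmega else CCont)"

text \<open>Subset sum for the set of indices A (i.e. the 0-1 sequence given by indicator of A).\<close>
definition subsum :: "(nat \<Rightarrow> real) \<Rightarrow> nat set \<Rightarrow> real" where
  "subsum x A = (\<Sum>n. if n \<in> A then x n else 0)"

definition achievement_set :: "(nat \<Rightarrow> real) \<Rightarrow> real set" where
  "achievement_set x = {subsum x A | A. True}"

definition cardinal_function :: "(nat \<Rightarrow> real) \<Rightarrow> real \<Rightarrow> cval" where
  "cardinal_function x y = cardval {A :: nat set. subsum x A = y}"

definition cf_range :: "(nat \<Rightarrow> real) \<Rightarrow> cval set" where
  "cf_range x = cardinal_function x ` achievement_set x"

definition admissible_seq :: "(nat \<Rightarrow> real) \<Rightarrow> bool" where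
  "admissible_seq x \<longleftrightarrow> (\<forall>n. x n > 0) \<and> summable x"

definition finite_union_intervals :: "real set \<Rightarrow> bool" where
  "finite_union_intervals S \<longleftrightarrow>
     (\<exists>F. finite F \<and> F \<noteq> {} \<and> (\<forall>(a,b)\<in>F. a < b) \<and> S = (\<Union>(a,b)\<in>F. {a..b}))"

definition family_I :: "cval set set" where
  "family_I = {cf_range x | x. admissible_seq x \<and> finite_union_intervals (achievement_set x)}"

definition family_I1 :: "cval set set" where
  "family_I1 = {cf_range x | x. admissible_seq x \<and> (\<exists>a b. a < b \<and> achievement_set x = {a..b})}"

end

theory Submission
  imports Defs
begin

text \<open>
  The sequence \<open>2, 2, 1/2, 1/4, 1/8, \<dots>\<close> has achievement set \<open>[0,1] \<union> [2,3] \<union> [4,5]\<close>,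
  and a point \<open>z\<close> has \<open>u z + 2 u (z - 2) + u (z - 4)\<close> representations, where \<open>u t\<close> is the
  number of binary expansions of \<open>t\<close> (\<open>2\<close> for dyadic \<open>t \<in> (0,1)\<close>, \<open>1\<close> otherwise on
  \<open>[0,1]\<close>); so its cardinal function has range \<open>{1, 2, 4}\<close>.

  Conversely, rearrange a sequence with interval achievement set decreasingly. Kakeya's
  condition \<open>y n \<le> r (n + 1)\<close> holds for the tail sums \<open>r n = (\<Sum>k\<ge>n. y k)\<close>. If it is
  strict infinitely often, nested choices produce points with arbitrarily many representations.
  If it is never strict, \<open>y\<close> is a multiple of \<open>(1/2^(k+1))\<close> and no point has more than two
  representations. Otherwise let \<open>N\<close> be the last strict index: the tail after \<open>N\<close> is binary,
  and for small \<open>s \<ge> 0\<close> the point \<open>y N + r (N + 1) s\<close> has \<open>u (t + s) + m u s\<close> representations,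
  where \<open>t = y N / r (N + 1)\<close> and \<open>m \<ge> 1\<close> is the multiplicity of the value \<open>y N\<close>. Comparing
  dyadic and non-dyadic \<open>s\<close> shows that this number leaves \<open>{1, 2, 4}\<close>.
\<close>

section \<open>Subset sums of positive summable sequences\<close>

lemma admissible_summable_on:
  assumes "admissible_seq y"
  shows "y summable_on A"
proof -
  have "y summable_on UNIV"
    using assms
    by (intro summable_nonneg_imp_summable_on) (auto simp: admissible_seq_def less_imp_le)
  then show ?thesis
    by (rule summable_on_subset_banach) simp
qed

lemma subsum_eq_infsum:
  assumes "admissible_seq y"
  shows "subsum y A = infsum y A"
proof -
  define g where "g n = (if n \<in> A then y n else 0)" for n
  have g_nonneg: "g n \<ge> 0" for n
    using assms by (simp add: g_def admissible_seq_def less_imp_le)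
  have "summable g"
    by (rule summable_comparison_test'[of y])
      (use assms g_nonneg in \<open>auto simp: g_def admissible_seq_def less_imp_le\<close>)
  then have "(g has_sum suminf g) UNIV"
    using sums_nonneg_imp_has_sum g_nonneg summable_sums by blast
  then have "(y has_sum suminf g) A"
    by (subst has_sum_cong_neutral[where g = g and T = UNIV]) (auto simp: g_def)
  then show ?thesis
    unfolding subsum_def g_def[symmetric] by (metis infsumI)
qed

context
  fixes y :: "nat \<Rightarrow> real"
  assumes y: "admissible_seq y"
begin

lemma admissible_pos: "0 < y n"
  using y by (simp add: admissible_seq_def)

lemma infsum_admissible_Un: "A \<inter> B = {} \<Longrightarrow> infsum y (A \<union> B) = infsum y A + infsum y B"
  using infsum_Un_disjoint admissible_summable_on[OF y] by blast

lemma infsum_admissible_finite_Un: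
  "finite E \<Longrightarrow> E \<inter> B = {} \<Longrightarrow> infsum y (E \<union> B) = sum y E + infsum y B"
  using infsum_admissible_Un by simp

lemma infsum_admissible_insert: "i \<notin> A \<Longrightarrow> infsum y (insert i A) = y i + infsum y A"
  using infsum_admissible_finite_Un[of "{i}" A] by simp

lemma infsum_admissible_split: "infsum y A = sum y (A \<inter> {..<n}) + infsum y (A \<inter> {n..})"
proof -
  have "infsum y ((A \<inter> {..<n}) \<union> (A \<inter> {n..})) = sum y (A \<inter> {..<n}) + infsum y (A \<inter> {n..})"
    by (rule infsum_admissible_finite_Un) auto
  moreover have "(A \<inter> {..<n}) \<union> (A \<inter> {n..}) = A"
    by auto
  ultimately show ?thesis
    by simp
qed

lemma infsum_admissible_nonneg: "0 \<le> infsum y A"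
  using admissible_pos by (intro infsum_nonneg) (simp add: less_imp_le)

lemma infsum_admissible_mono: "A \<subseteq> B \<Longrightarrow> infsum y A \<le> infsum y B"
  using admissible_pos admissible_summable_on[OF y]
  by (intro infsum_mono2) (auto simp: less_imp_le)

lemma infsum_admissible_ge: "i \<in> A \<Longrightarrow> y i \<le> infsum y A"
  using infsum_admissible_mono[of "{i}" A] by simp

lemma infsum_admissible_strict_mono:
  assumes "A \<subseteq> B" "i \<in> B" "i \<notin> A"
  shows "infsum y A < infsum y B"
proof -
  have "A \<union> (B - A) = B"
    using assms(1) by auto
  then have "infsum y B = infsum y A + infsum y (B - A)"
    using infsum_admissible_Un[of A "B - A"] by simp
  moreover have "y i \<le> infsum y (B - A)"
    using assms by (intro infsum_admissible_ge) simp
  ultimately show ?thesis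
    using admissible_pos[of i] by linarith
qed

lemma infsum_admissible_pos: "A \<noteq> {} \<Longrightarrow> 0 < infsum y A"
  using infsum_admissible_strict_mono[of "{}" A] by auto

lemma infsum_admissible_tail_Suc: "infsum y {n..} = y n + infsum y {Suc n..}"
proof -
  have "{n..} = insert n {Suc n..}"
    by auto
  then show ?thesis
    using infsum_admissible_insert[of n "{Suc n..}"] by simp
qed

lemma infsum_admissible_tail: "infsum y {n..} = suminf y - sum y {..<n}"
proof -
  have "infsum y UNIV = sum y {..<n} + infsum y {n..}"
    using infsum_admissible_split[of UNIV n] by simp
  moreover have "infsum y UNIV = suminf y"
    using subsum_eq_infsum[OF y, of UNIV] by (simp add: subsum_def)
  ultimately show ?thesis
    by (metis add_diff_cancel_left')
qed

lemma infsum_admissible_tail_LIMSEQ: "(\<lambda>n. infsum y {n..}) \<longlonglongrightarrow> 0"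
proof -
  have "(\<lambda>n. suminf y - sum y {..<n}) \<longlonglongrightarrow> suminf y - suminf y"
    using y by (intro tendsto_diff[OF tendsto_const] summable_LIMSEQ) (simp add: admissible_seq_def)
  then show ?thesis
    by (simp only: infsum_admissible_tail diff_self)
qed

end

lemma cardval_bij_betw:
  assumes "bij_betw f A B"
  shows "cardval A = cardval B"
proof -
  have "countable A \<longleftrightarrow> countable B"
    using assms countable_image countable_image_inj_on unfolding bij_betw_def by metis
  then show ?thesis
    using bij_betw_finite[OF assms] bij_betw_same_card[OF assms] by (simp add: cardval_def)
qed

lemma achievement_set_eq:
  "admissible_seq y \<Longrightarrow> achievement_set y = range (infsum y)"
  unfolding achievement_set_def by (simp add: subsum_eq_infsum full_SetCompr_eq)

lemma cardinal_function_eq: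
  "admissible_seq y \<Longrightarrow> cardinal_function y z = cardval {A. infsum y A = z}"
  unfolding cardinal_function_def by (simp add: subsum_eq_infsum)

lemma achievement_set_eq_Icc_imp:
  assumes y: "admissible_seq y" and "achievement_set y = {a..b}"
  shows "a = 0" and "b = infsum y UNIV"
proof -
  have range_eq: "range (infsum y) = {a..b}"
    using assms by (simp add: achievement_set_eq)
  have "range (infsum y) \<subseteq> {0..infsum y UNIV}"
    using y by (auto simp: infsum_admissible_nonneg infsum_admissible_mono)
  moreover have "0 \<in> range (infsum y)" "infsum y UNIV \<in> range (infsum y)"
    by (metis infsum_empty rangeI, rule rangeI)
  ultimately have "{a..b} \<subseteq> {0..infsum y UNIV}" "0 \<in> {a..b}" "infsum y UNIV \<in> {a..b}"
    unfolding range_eq by auto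
  then show "a = 0" "b = infsum y UNIV"
    by auto
qed

lemma cardval_eq_CFin: "cardval A = CFin k \<longleftrightarrow> finite A \<and> card A = k"
  by (simp add: cardval_def)

lemma cf_range_subset_CFin_imp:
  assumes y: "admissible_seq y" and "cf_range y \<subseteq> CFin ` K" and "z \<in> achievement_set y"
  shows "finite {B. infsum y B = z} \<and> card {B. infsum y B = z} \<in> K"
proof -
  have "cardinal_function y z \<in> CFin ` K"
    using assms(2,3) by (auto simp: cf_range_def)
  then show ?thesis
    by (auto simp: cardinal_function_eq[OF y] cardval_eq_CFin)
qed

section \<open>Decreasing rearrangements\<close>

lemma card_predecessors_bij:
  fixes r :: "nat \<Rightarrow> nat \<Rightarrow> bool"
  assumes trans: "\<And>i j k. r i j \<Longrightarrow> r j k \<Longrightarrow> r i k"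
    and irrefl: "\<And>i. \<not> r i i"
    and total: "\<And>i j. i \<noteq> j \<Longrightarrow> r i j \<or> r j i"
    and finite_pred: "\<And>j. finite {i. r i j}"
  defines "level j \<equiv> card {i. r i j}"
  shows "bij level" and "r i j \<Longrightarrow> level i < level j"
proof -
  show less: "level i < level j" if "r i j" for i j
    unfolding level_def
    using that trans irrefl finite_pred by (intro psubset_card_mono) blast+
  have "inj level"
    by (metis injI less less_irrefl total)
  moreover have "surj level"
  proof -
    have image_pred: "level ` {i. r i j} = {..<level j}" for j
    proof (rule card_subset_eq)
      show "level ` {i. r i j} \<subseteq> {..<level j}"
        using less by auto
      show "card (level ` {i. r i j}) = card {..<level j}"
        using card_image[OF inj_on_subset[OF \<open>inj level\<close>]] by (simp add: level_def)
    qed simp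
    have unbounded: "\<exists>j. n < level j" for n
    proof (rule ccontr)
      assume "\<not> (\<exists>j. n < level j)"
      then have "range level \<subseteq> {..n}"
        by (auto simp: not_less)
      then show False
        using range_inj_infinite[OF \<open>inj level\<close>] finite_subset by blast
    qed
    have "n \<in> range level" for n
    proof -
      obtain j where "n < level j"
        using unbounded by blast
      then show ?thesis
        using image_pred[of j] by blast
    qed
    then show ?thesis
      by blast
  qed
  ultimately show "bij level"
    by (simp add: bij_def)
qed

lemma decreasing_rearrangement:
  fixes x :: "nat \<Rightarrow> real"
  assumes pos: "\<And>n. 0 < x n" and lim: "x \<longlonglongrightarrow> 0"
  obtains \<sigma> :: "nat \<Rightarrow> nat" where "bij \<sigma>" "antimono (x \<circ> \<sigma>)"
proof -
  define r where "r i j \<longleftrightarrow> x j < x i \<or> (x i = x j \<and> i < j)" for i j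
  have fin: "finite {i. r i j}" for j
  proof -
    obtain N where N: "\<And>i. N \<le> i \<Longrightarrow> x i < x j"
      using order_tendstoD(2)[OF lim pos[of j]] by (auto simp: eventually_sequentially)
    have "i < N" if "r i j" for i
      using that N[of i] by (cases "N \<le> i") (auto simp: r_def)
    then have "{i. r i j} \<subseteq> {..<N}"
      by auto
    then show ?thesis
      using finite_subset by blast
  qed
  have rank_bij: "bij (\<lambda>j. card {i. r i j})"
    by (rule card_predecessors_bij(1)) (use fin in \<open>auto simp: r_def\<close>)
  have rank_less: "card {k. r k i} < card {k. r k j}" if "r i j" for i j
    by (rule card_predecessors_bij(2)) (use fin that in \<open>auto simp: r_def\<close>)
  define \<sigma> where "\<sigma> = inv (\<lambda>j. card {i. r i j})"
  have "bij \<sigma>"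
    unfolding \<sigma>_def using rank_bij by (rule bij_imp_bij_inv)
  have rank_\<sigma>: "card {i. r i (\<sigma> a)} = a" for a
    unfolding \<sigma>_def using surj_f_inv_f[OF bij_is_surj[OF rank_bij], of a] by simp
  have "x (\<sigma> b) \<le> x (\<sigma> a)" if "a \<le> b" for a b
  proof (rule ccontr)
    assume "\<not> x (\<sigma> b) \<le> x (\<sigma> a)"
    then have "r (\<sigma> b) (\<sigma> a)"
      by (simp add: r_def)
    then have "b < a"
      using rank_less[of "\<sigma> b" "\<sigma> a"] by (simp add: rank_\<sigma>)
    with that show False
      by simp
  qed
  then have "antimono (x \<circ> \<sigma>)"
    by (simp add: antimono_def)
  with \<open>bij \<sigma>\<close> show ?thesis
    by (rule that)
qed

context
  fixes x :: "nat \<Rightarrow> real" and \<sigma> :: "nat \<Rightarrow> nat"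
  assumes x: "admissible_seq x" and \<sigma>: "bij \<sigma>"
begin

lemma admissible_seq_reindex: "admissible_seq (x \<circ> \<sigma>)"
proof -
  have "(x \<circ> \<sigma>) summable_on UNIV"
    using summable_on_reindex_bij_betw[OF \<sigma>, where f = x] admissible_summable_on[OF x]
    by (simp add: o_def)
  then have "summable (x \<circ> \<sigma>)"
    using x by (auto simp: summable_on_UNIV_nonneg_real_iff admissible_seq_def less_imp_le)
  then show ?thesis
    using x by (simp add: admissible_seq_def)
qed

lemma bij_betw_representations_reindex:
  "bij_betw ((`) \<sigma>) {C. infsum (x \<circ> \<sigma>) C = z} {A. infsum x A = z}"
proof -
  have reindex: "infsum x (\<sigma> ` C) = infsum (x \<circ> \<sigma>) C" for C
    using \<sigma> by (metis bij_is_inj infsum_reindex inj_on_subset subset_UNIV)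
  show ?thesis
  proof (rule bij_betwI')
    show "(\<sigma> ` C = \<sigma> ` D) = (C = D)" for C D
      using \<sigma> by (simp add: bij_is_inj inj_image_eq_iff)
    show "\<sigma> ` C \<in> {A. infsum x A = z}" if "C \<in> {C. infsum (x \<circ> \<sigma>) C = z}" for C
      using that reindex by simp
    show "\<exists>C\<in>{C. infsum (x \<circ> \<sigma>) C = z}. A = \<sigma> ` C" if "A \<in> {A. infsum x A = z}" for A
      using that reindex[of "\<sigma> -` A"] \<sigma> by (auto simp: bij_is_surj surj_image_vimage_eq)
  qed
qed

lemma achievement_set_reindex: "achievement_set (x \<circ> \<sigma>) = achievement_set x"
proof -
  have "{C. infsum (x \<circ> \<sigma>) C = z} \<noteq> {} \<longleftrightarrow> {A. infsum x A = z} \<noteq> {}" for z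
    using bij_betw_representations_reindex[of z] by (metis bij_betw_def image_is_empty)
  then have "range (infsum (x \<circ> \<sigma>)) = range (infsum x)"
    by (auto simp: image_iff) (metis (mono_tags) empty_Collect_eq)+
  then show ?thesis
    using x admissible_seq_reindex by (simp add: achievement_set_eq)
qed

lemma cardinal_function_reindex: "cardinal_function (x \<circ> \<sigma>) = cardinal_function x"
  using cardval_bij_betw[OF bij_betw_representations_reindex] x admissible_seq_reindex
  by (auto simp: cardinal_function_eq)

end

section \<open>Kakeya's condition\<close>

primrec greedy_sum :: "(nat \<Rightarrow> real) \<Rightarrow> nat \<Rightarrow> real \<Rightarrow> nat \<Rightarrow> real" where
  "greedy_sum y m z 0 = 0"
| "greedy_sum y m z (Suc k) =
     (if greedy_sum y m z k + y (m + k) \<le> z then greedy_sum y m z k + y (m + k)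
      else greedy_sum y m z k)"

context
  fixes y :: "nat \<Rightarrow> real"
  assumes y: "admissible_seq y"
    and kakeya: "\<And>n. y n \<le> infsum y {Suc n..}"
begin

lemma greedy_sum_bounds:
  assumes "0 \<le> z" "z \<le> infsum y {m..}"
  shows "greedy_sum y m z k \<le> z" and "z - greedy_sum y m z k \<le> infsum y {m + k..}"
proof -
  show "greedy_sum y m z k \<le> z"
    by (induction k) (use assms in auto)
  show "z - greedy_sum y m z k \<le> infsum y {m + k..}"
  proof (induction k)
    case 0
    then show ?case
      using assms by simp
  next
    case (Suc k)
    then show ?case
      using infsum_admissible_tail_Suc[OF y, of "m + k"] kakeya[of "m + k"] by auto
  qed
qed

lemma kakeya_tail_representation:
  assumes z: "0 \<le> z" "z \<le> infsum y {m..}"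
  obtains B where "B \<subseteq> {m..}" "infsum y B = z"
proof -
  define g where "g = greedy_sum y m z"
  define B where "B = {m + k | k. g k + y (m + k) \<le> z}"
  have B_tail: "B \<subseteq> {m..}"
    by (auto simp: B_def)
  have g_eq: "g k = sum y (B \<inter> {..<m + k})" for k
  proof (induction k)
    case 0
    have "B \<inter> {..<m} = {}"
      using B_tail by auto
    then show ?case
      by (simp add: g_def)
  next
    case (Suc k)
    have "m + k \<in> B \<longleftrightarrow> g k + y (m + k) \<le> z"
      by (auto simp: B_def)
    moreover have "B \<inter> {..<m + Suc k} = (B \<inter> {..<m + k}) \<union> (B \<inter> {m + k})"
      by auto
    ultimately show ?case
      using Suc.IH by (cases "m + k \<in> B") (auto simp: g_def)
  qed
  have g_le: "g k \<le> z" and gap: "z - g k \<le> infsum y {m + k..}" for k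
    using greedy_sum_bounds[OF z] by (simp_all add: g_def)
  have "\<bar>infsum y B - z\<bar> \<le> infsum y {m + k..}" for k
  proof -
    have "infsum y B = g k + infsum y (B \<inter> {m + k..})"
      unfolding g_eq by (rule infsum_admissible_split[OF y])
    moreover have "0 \<le> infsum y (B \<inter> {m + k..})" "infsum y (B \<inter> {m + k..}) \<le> infsum y {m + k..}"
      using y by (auto simp: infsum_admissible_nonneg infsum_admissible_mono)
    ultimately show ?thesis
      using g_le[of k] gap[of k] by linarith
  qed
  moreover have "(\<lambda>k. infsum y {m + k..}) \<longlonglongrightarrow> 0"
    using LIMSEQ_ignore_initial_segment[OF infsum_admissible_tail_LIMSEQ[OF y], of m]
    by (simp add: add.commute)
  ultimately have "\<bar>infsum y B - z\<bar> \<le> 0"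
    by (intro LIMSEQ_le_const) auto
  then show ?thesis
    using B_tail that by simp
qed

lemma prefix_representation:
  assumes E: "E \<subseteq> {..<m}" and w: "sum y E \<le> w" "w \<le> sum y E + infsum y {m..}"
  obtains B where "infsum y B = w" "B \<inter> {..<m} = E"
proof -
  obtain C where C: "C \<subseteq> {m..}" "infsum y C = w - sum y E"
    using kakeya_tail_representation[of "w - sum y E" m] w by auto
  have "finite E"
    using E finite_subset by blast
  moreover have "E \<inter> C = {}"
  proof -
    have "x < m" "m \<le> x" if "x \<in> E" "x \<in> C" for x
      using that E C(1) by auto
    then show ?thesis
      by (meson disjoint_iff not_le)
  qed
  ultimately have "infsum y (E \<union> C) = w"
    using infsum_admissible_finite_Un[OF y] C(2) by simp
  moreover have "(E \<union> C) \<inter> {..<m} = E"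
    using E C(1) by auto
  ultimately show ?thesis
    by (rule that)
qed

end

lemma kakeya_condition:
  assumes y: "admissible_seq y" and anti: "antimono y"
    and interval: "achievement_set y = {0..infsum y UNIV}"
  shows "y n \<le> infsum y {Suc n..}"
proof (rule ccontr)
  assume "\<not> ?thesis"
  then have gap: "infsum y {Suc n..} < y n"
    by simp
  define z where "z = (y n + infsum y {Suc n..}) / 2"
  have "infsum y {n..} \<le> infsum y UNIV"
    using y by (simp add: infsum_admissible_mono)
  then have "0 \<le> z" "z \<le> infsum y UNIV"
    using infsum_admissible_tail_Suc[OF y, of n] infsum_admissible_nonneg[OF y, of "{Suc n..}"] gap
    by (auto simp: z_def)
  then have "z \<in> range (infsum y)"
    using interval by (simp add: achievement_set_eq[OF y])
  then obtain B where B: "infsum y B = z"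
    by (metis rangeE)
  show False
  proof (cases "B \<subseteq> {Suc n..}")
    case True
    then show False
      using infsum_admissible_mono[OF y True] B gap by (simp add: z_def)
  next
    case False
    then obtain k where "k \<in> B" "\<not> Suc n \<le> k"
      by auto
    then have "k \<in> B" "k \<le> n"
      by simp_all
    then have "y n \<le> infsum y B"
      using infsum_admissible_ge[OF y] antimonoD[OF anti] by (meson order.trans)
    then show False
      using B gap by (simp add: z_def)
  qed
qed

section \<open>Points with many representations\<close>

context
  fixes y :: "nat \<Rightarrow> real"
  assumes y: "admissible_seq y"
    and kakeya: "\<And>n. y n \<le> infsum y {Suc n..}"
    and strict: "\<And>M. \<exists>n\<ge>M. y n < infsum y {Suc n..}"
begin

text \<open>By Kakeya's condition the sums of the sets with prefix \<open>P\<close> below \<open>n\<close> fill the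
  "cylinder" \<open>[sum y P, sum y P + infsum y {n..}]\<close>.\<close>

lemma exists_strict_cylinder_within:
  assumes E: "E \<subseteq> {..<m}" and uv: "u < v" "sum y E \<le> u" "v \<le> sum y E + infsum y {m..}"
  obtains n P where "m \<le> n" "P \<subseteq> {..<n}" "P \<inter> {..<m} = E" "y n < infsum y {Suc n..}"
    "u \<le> sum y P" "sum y P + infsum y {n..} \<le> v"
proof -
  let ?R = "\<lambda>n. infsum y {n..}"
  obtain M where M: "\<And>n. M \<le> n \<Longrightarrow> ?R n < (v - u) / 2"
    using order_tendstoD(2)[OF infsum_admissible_tail_LIMSEQ[OF y], of "(v - u) / 2"] uv(1)
    by (auto simp: eventually_sequentially)
  obtain n where n: "max M m \<le> n" "y n < ?R (Suc n)"
    using strict by blast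
  define c where "c = (u + v) / 2"
  obtain B where B: "infsum y B = c" "B \<inter> {..<m} = E"
    using prefix_representation[OF y kakeya E, of c] uv by (auto simp: c_def)
  define P where "P = B \<inter> {..<n}"
  have "infsum y B = sum y P + infsum y (B \<inter> {n..})"
    unfolding P_def by (rule infsum_admissible_split[OF y])
  moreover have "0 \<le> infsum y (B \<inter> {n..})" "infsum y (B \<inter> {n..}) \<le> ?R n"
    using y by (auto simp: infsum_admissible_nonneg infsum_admissible_mono)
  ultimately have "c - ?R n \<le> sum y P" "sum y P \<le> c"
    using B(1) by auto
  moreover have "?R n < (v - u) / 2"
    using M n(1) by simp
  moreover have "u = c - (v - u) / 2" "v = c + (v - u) / 2"
    by (simp_all add: c_def field_simps)
  ultimately have "u \<le> sum y P" "sum y P + ?R n \<le> v"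
    by linarith+
  moreover have "m \<le> n" "P \<subseteq> {..<n}" "P \<inter> {..<m} = E"
    using B(2) n(1) by (auto simp: P_def)
  ultimately show ?thesis
    using that n(2) by blast
qed

lemma many_representations_with_prefix:
  assumes "E \<subseteq> {..<m}" "u < v" "sum y E \<le> u" "v \<le> sum y E + infsum y {m..}"
  shows "\<exists>z\<in>{u..v}. \<exists>Bs. Suc k \<le> card Bs \<and> (\<forall>B\<in>Bs. infsum y B = z \<and> B \<inter> {..<m} = E)"
  using assms
proof (induction k arbitrary: E m u v)
  case 0
  then obtain B where "infsum y B = u" "B \<inter> {..<m} = E"
    using prefix_representation[OF y kakeya, of E m u] by auto
  then show ?case
    using 0(2) by (intro bexI[of _ u] exI[of _ "{B}"]) auto
next
  case (Suc k)
  obtain n P where n: "m \<le> n" "y n < infsum y {Suc n..}"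
    and P: "P \<subseteq> {..<n}" "P \<inter> {..<m} = E" "u \<le> sum y P" "sum y P + infsum y {n..} \<le> v"
    using exists_strict_cylinder_within[OF Suc.prems] by blast
  have tail_n: "infsum y {n..} = y n + infsum y {Suc n..}"
    by (rule infsum_admissible_tail_Suc[OF y])
  have "finite P" "n \<notin> P"
    using P(1) finite_subset by auto
  then have "sum y (insert n P) = sum y P + y n"
    by simp
  then have "\<exists>z\<in>{sum y P + y n..sum y P + infsum y {Suc n..}}. \<exists>Bs. Suc k \<le> card Bs \<and>
      (\<forall>B\<in>Bs. infsum y B = z \<and> B \<inter> {..<Suc n} = insert n P)"
    using P(1) n(2) admissible_pos[OF y, of n] by (intro Suc.IH) auto
  then obtain z Bs where z: "sum y P + y n \<le> z" "z \<le> sum y P + infsum y {Suc n..}"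
    and Bs: "Suc k \<le> card Bs" "\<forall>B\<in>Bs. infsum y B = z \<and> B \<inter> {..<Suc n} = insert n P"
    by auto
  txt \<open>A representation of \<open>z\<close> avoiding the index \<open>n\<close> differs from all those in \<open>Bs\<close>.\<close>
  have "P \<subseteq> {..<Suc n}"
    using P(1) by auto
  then obtain B0 where B0: "infsum y B0 = z" "B0 \<inter> {..<Suc n} = P"
    using prefix_representation[OF y kakeya, of P "Suc n" z] z admissible_pos[OF y, of n] by auto
  have "B0 \<notin> Bs"
    using Bs(2) B0(2) \<open>n \<notin> P\<close> by blast
  moreover have "finite Bs"
    using Bs(1) by (metis card.infinite not_less_eq_eq zero_le)
  ultimately have "Suc (Suc k) \<le> card (insert B0 Bs)"
    using Bs(1) by simp
  moreover have "B' \<inter> {..<m} = E" if "B' \<in> insert B0 Bs" for B'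
  proof -
    have "P \<inter> {..<m} = E" "insert n P \<inter> {..<m} = E"
      using P(2) n(1) by auto
    moreover have "B' \<inter> {..<Suc n} = P \<or> B' \<inter> {..<Suc n} = insert n P"
      using that Bs(2) B0(2) by blast
    moreover have "B' \<inter> {..<m} = (B' \<inter> {..<Suc n}) \<inter> {..<m}"
      using n(1) by auto
    ultimately show ?thesis
      by metis
  qed
  moreover have "u \<le> z \<and> z \<le> v"
    using z P(3,4) tail_n admissible_pos[OF y, of n] by (intro conjI; linarith)
  moreover have "\<forall>B'\<in>insert B0 Bs. infsum y B' = z"
    using Bs(2) B0(1) by blast
  ultimately show ?case
    by (metis atLeastAtMost_iff)
qed

lemma many_representations:
  "\<exists>z. 0 \<le> z \<and> z \<le> infsum y UNIV \<and>
     (finite {B. infsum y B = z} \<longrightarrow> k < card {B. infsum y B = z})"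
proof -
  have "0 < infsum y UNIV"
    using infsum_admissible_pos[OF y] by simp
  then obtain z Bs where "z \<in> {0..infsum y UNIV}" "Suc k \<le> card Bs" "\<forall>B\<in>Bs. infsum y B = z"
    using many_representations_with_prefix[of "{}" 0 0 "infsum y UNIV" k] by auto
  moreover have "finite {B. infsum y B = z} \<longrightarrow> card Bs \<le> card {B. infsum y B = z}"
    using \<open>\<forall>B\<in>Bs. infsum y B = z\<close> by (auto intro: card_mono)
  ultimately show ?thesis
    by auto
qed

end

section \<open>Binary expansions\<close>

definition halves :: "nat \<Rightarrow> real" where
  "halves k = (1 / 2) ^ Suc k"

definition binary_reps :: "real \<Rightarrow> nat set set" where
  "binary_reps t = {G. infsum halves G = t}"

definition dyadic :: "real \<Rightarrow> bool" where
  "dyadic t \<longleftrightarrow> (\<exists>j p :: nat. t = real j / 2 ^ p)"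

lemma halves_eq: "halves = (\<lambda>k. 1 / 2 * (1 / 2) ^ k)"
  by (rule ext) (simp add: halves_def)

lemma admissible_halves: "admissible_seq halves"
proof -
  have "summable (\<lambda>k. 1 / 2 * (1 / 2 :: real) ^ k)"
    by (intro summable_mult summable_geometric) simp
  then show ?thesis
    by (simp add: admissible_seq_def halves_eq)
qed

lemma infsum_halves_tail: "infsum halves {m..} = (1 / 2) ^ m"
proof -
  have "suminf halves = 1"
    unfolding halves_eq using suminf_mult[OF summable_geometric[of "1 / 2 :: real"], of "1 / 2"]
    by (simp add: suminf_geometric)
  moreover have "sum halves {..<m} = 1 - (1 / 2) ^ m"
    by (induction m) (simp_all add: halves_def)
  ultimately show ?thesis
    by (simp add: infsum_admissible_tail[OF admissible_halves])
qed

lemma halves_eq_tail: "halves n = infsum halves {Suc n..}"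
  by (simp add: infsum_halves_tail halves_def)

lemma infsum_halves_UNIV: "infsum halves UNIV = 1"
  using infsum_halves_tail[of 0] by simp

lemma binary_reps_nonempty_iff: "binary_reps t \<noteq> {} \<longleftrightarrow> 0 \<le> t \<and> t \<le> 1"
proof
  assume "binary_reps t \<noteq> {}"
  then obtain G where "infsum halves G = t"
    by (auto simp: binary_reps_def)
  then show "0 \<le> t \<and> t \<le> 1"
    using infsum_admissible_nonneg[OF admissible_halves, of G]
      infsum_admissible_mono[OF admissible_halves, of G UNIV] infsum_halves_UNIV by auto
next
  assume "0 \<le> t \<and> t \<le> 1"
  then obtain G where "infsum halves G = t"
    using kakeya_tail_representation[OF admissible_halves, of t 0] halves_eq_tail
      infsum_halves_tail[of 0]
    by auto
  then show "binary_reps t \<noteq> {}"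
    by (auto simp: binary_reps_def)
qed

lemma binary_reps_first_difference:
  assumes eq: "infsum halves G = infsum halves G'" and k: "k \<in> G" "k \<notin> G'"
    and below: "\<And>i. i < k \<Longrightarrow> i \<in> G \<longleftrightarrow> i \<in> G'"
  shows "G \<subseteq> {..k}" and "{Suc k..} \<subseteq> G'"
proof -
  note h = admissible_halves
  have "G \<inter> {..<k} = G' \<inter> {..<k}"
    using below by auto
  then have "infsum halves (G \<inter> {k..}) = infsum halves (G' \<inter> {k..})"
    using eq infsum_admissible_split[OF h, of G k] infsum_admissible_split[OF h, of G' k] by simp
  moreover have "G \<inter> {k..} = insert k (G \<inter> {Suc k..})" "G' \<inter> {k..} = G' \<inter> {Suc k..}"
    using k by (auto simp: Suc_le_eq le_less)
  ultimately have tail_eq: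
      "halves k + infsum halves (G \<inter> {Suc k..}) = infsum halves (G' \<inter> {Suc k..})"
    using infsum_admissible_insert[OF h, of k "G \<inter> {Suc k..}"] by simp
  moreover have "infsum halves (G' \<inter> {Suc k..}) \<le> infsum halves {Suc k..}"
    by (rule infsum_admissible_mono[OF h]) auto
  ultimately have "infsum halves (G \<inter> {Suc k..}) \<le> 0"
    using halves_eq_tail[of k] by simp
  then have "G \<inter> {Suc k..} = {}"
    using infsum_admissible_pos[OF h] by (metis not_le)
  then show "G \<subseteq> {..k}"
    by (auto simp: not_less_eq_eq)
  show "{Suc k..} \<subseteq> G'"
  proof
    fix i
    assume i: "i \<in> {Suc k..}"
    show "i \<in> G'"
    proof (rule ccontr)
      assume "i \<notin> G'"
      then have "infsum halves (G' \<inter> {Suc k..}) < infsum halves {Suc k..}"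
        using i by (intro infsum_admissible_strict_mono[OF h]) auto
      then show False
        using tail_eq halves_eq_tail[of k] infsum_admissible_nonneg[OF h, of "G \<inter> {Suc k..}"]
        by simp
    qed
  qed
qed

lemma binary_reps_finite_iff_infinite:
  assumes "G \<in> binary_reps t" "G' \<in> binary_reps t" "G \<noteq> G'"
  shows "finite G \<longleftrightarrow> infinite G'"
proof -
  have "\<exists>k. (k \<in> G) \<noteq> (k \<in> G')"
    using assms(3) by blast
  define k where "k = (LEAST k. (k \<in> G) \<noteq> (k \<in> G'))"
  have k: "(k \<in> G) \<noteq> (k \<in> G')"
    unfolding k_def by (rule LeastI_ex) fact
  have below: "i < k \<Longrightarrow> i \<in> G \<longleftrightarrow> i \<in> G'" for i
    using not_less_Least[of i "\<lambda>k. (k \<in> G) \<noteq> (k \<in> G')"] unfolding k_def by blast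
  have eq: "infsum halves G = infsum halves G'"
    using assms(1,2) by (simp add: binary_reps_def)
  show ?thesis
  proof (cases "k \<in> G")
    case True
    then have "G \<subseteq> {..k}" "{Suc k..} \<subseteq> G'"
      using k binary_reps_first_difference[OF eq _ _ below] by auto
    then show ?thesis
      using finite_subset infinite_Ici[of "Suc k"] by blast
  next
    case False
    then have "G' \<subseteq> {..k}" "{Suc k..} \<subseteq> G"
      using k below binary_reps_first_difference[OF eq[symmetric], of k] by auto
    then show ?thesis
      using finite_subset infinite_Ici[of "Suc k"] by blast
  qed
qed

lemma binary_reps_subset_pair: "\<exists>F G. binary_reps t \<subseteq> {F, G}"
proof (cases "\<exists>F G. F \<in> binary_reps t \<and> G \<in> binary_reps t \<and> F \<noteq> G")
  case True
  then obtain F G where FG: "F \<in> binary_reps t" "G \<in> binary_reps t" "F \<noteq> G"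
    by blast
  have "H = F \<or> H = G" if "H \<in> binary_reps t" for H
    using binary_reps_finite_iff_infinite[OF that FG(1)]
      binary_reps_finite_iff_infinite[OF that FG(2)] binary_reps_finite_iff_infinite[OF FG]
    by blast
  then show ?thesis
    by blast
next
  case False
  then show ?thesis
    by blast
qed

lemma finite_binary_reps: "finite (binary_reps t)"
  using binary_reps_subset_pair finite_subset by (metis finite.emptyI finite.insertI)

lemma card_binary_reps_le_2: "card (binary_reps t) \<le> 2"
proof -
  obtain F G where "binary_reps t \<subseteq> {F, G}"
    using binary_reps_subset_pair by blast
  then have "card (binary_reps t) \<le> card {F, G}"
    by (rule card_mono[rotated]) simp
  also have "\<dots> \<le> 2"
    by (simp add: card_insert_if)
  finally show ?thesis .
qed

lemma dyadic_sum_halves: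
  assumes "finite F"
  shows "dyadic (sum halves F)"
proof -
  obtain p where p: "F \<subseteq> {..<p}"
    using assms finite_nat_bounded by blast
  have "halves i = real (2 ^ (p - Suc i)) / 2 ^ p" if "i \<in> F" for i
  proof -
    have "p = (p - Suc i) + Suc i"
      using p that by auto
    then have "(2::real) ^ p = 2 ^ (p - Suc i) * 2 ^ Suc i"
      by (metis power_add)
    then show ?thesis
      by (simp add: halves_def power_divide)
  qed
  then have "sum halves F = real (\<Sum>i\<in>F. 2 ^ (p - Suc i)) / 2 ^ p"
    by (simp add: sum_divide_distrib)
  then show ?thesis
    unfolding dyadic_def by blast
qed

lemma dyadic_finite_rep:
  assumes "j < 2 ^ p"
  shows "\<exists>F. F \<subseteq> {..<p} \<and> sum halves F = real j / 2 ^ p"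
  using assms
proof (induction p arbitrary: j)
  case 0
  then show ?case
    by simp
next
  case (Suc p)
  have "j div 2 < 2 ^ p"
    using Suc.prems by auto
  then obtain F where F: "F \<subseteq> {..<p}" "sum halves F = real (j div 2) / 2 ^ p"
    using Suc.IH by blast
  have "finite F" "p \<notin> F"
    using F(1) finite_subset by auto
  consider "j = 2 * (j div 2)" | "j = 2 * (j div 2) + 1"
    by linarith
  then show ?case
  proof cases
    case 1
    then have "real j / 2 ^ Suc p = real (j div 2) / 2 ^ p"
      by (metis of_nat_mult of_nat_numeral mult_divide_mult_cancel_left_if power_Suc
          zero_neq_numeral)
    then show ?thesis
      using F by (intro exI[of _ F]) auto
  next
    case 2
    then have "sum halves (insert p F) = real j / 2 ^ Suc p"
      using F \<open>finite F\<close> \<open>p \<notin> F\<close> by (simp add: halves_def field_simps)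
    then show ?thesis
      using F(1) by (intro exI[of _ "insert p F"]) auto
  qed
qed

lemma dyadic_diff:
  assumes "dyadic a" "dyadic b" "a \<le> b"
  shows "dyadic (b - a)"
proof -
  obtain j p j' q where a: "a = real j / 2 ^ p" and b: "b = real j' / 2 ^ q"
    using assms(1,2) unfolding dyadic_def by blast
  have b_a: "b - a = (real (j' * 2 ^ p) - real (j * 2 ^ q)) / 2 ^ (p + q)"
    unfolding a b by (simp add: field_simps power_add)
  then have "real (j' * 2 ^ p) - real (j * 2 ^ q) = (b - a) * 2 ^ (p + q)"
    by simp
  then have "j * 2 ^ q \<le> j' * 2 ^ p"
    using assms(3) by (metis diff_ge_0_iff_ge of_nat_le_iff zero_le_mult_iff zero_le_power
        zero_le_numeral)
  then have "b - a = real (j' * 2 ^ p - j * 2 ^ q) / 2 ^ (p + q)"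
    using b_a by (simp add: of_nat_diff)
  then show ?thesis
    unfolding dyadic_def by blast
qed

lemma countable_dyadic: "countable {t. dyadic t}"
proof -
  have "{t. dyadic t} = (\<lambda>(j, p). real j / 2 ^ p) ` (UNIV :: (nat \<times> nat) set)"
    by (auto simp: dyadic_def)
  then show ?thesis
    by simp
qed

lemma exists_not_dyadic_between:
  assumes "a < b"
  obtains s where "a < s" "s < b" "\<not> dyadic s"
proof -
  have "\<not> {a<..<b} \<subseteq> {t. dyadic t}"
    using countable_dyadic countable_subset uncountable_open_interval assms by blast
  then obtain s where "s \<in> {a<..<b}" "\<not> dyadic s"
    by blast
  then show ?thesis
    using that by auto
qed

lemma exists_dyadic_between_0:
  assumes "0 < \<delta>"
  obtains s where "0 < s" "s < \<delta>" "s < 1" "dyadic s"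
proof -
  obtain n where n: "(1 / 2 :: real) ^ n < min \<delta> 1"
    using real_arch_pow_inv[of "min \<delta> 1" "1 / 2"] assms by auto
  have "dyadic ((1 / 2) ^ n)"
    unfolding dyadic_def by (rule exI[of _ 1], rule exI[of _ n]) (simp add: power_divide)
  then show ?thesis
    using n by (intro that[of "(1 / 2) ^ n"]) auto
qed

lemma card_binary_reps_dyadic:
  assumes dy: "dyadic t" and pos: "0 < t" and lt1: "t < 1"
  shows "card (binary_reps t) = 2"
proof -
  obtain j p where jp: "t = real j / 2 ^ p"
    using dy unfolding dyadic_def by blast
  then have "real j < 2 ^ p"
    using lt1 by (simp add: divide_less_eq)
  then have "j < 2 ^ p"
    by (metis of_nat_less_iff of_nat_numeral of_nat_power)
  then obtain F where F: "F \<subseteq> {..<p}" "sum halves F = t"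
    using dyadic_finite_rep jp by blast
  then have "finite F" "F \<noteq> {}"
    using pos finite_subset by auto
  define k where "k = Max F"
  have k: "k \<in> F" "\<And>i. i \<in> F \<Longrightarrow> i \<le> k"
    using \<open>finite F\<close> \<open>F \<noteq> {}\<close> by (simp_all add: k_def)
  define G where "G = (F - {k}) \<union> {Suc k..}"
  have "(F - {k}) \<inter> {Suc k..} = {}"
    using k(2) by fastforce
  then have "infsum halves G = sum halves (F - {k}) + infsum halves {Suc k..}"
    unfolding G_def using \<open>finite F\<close>
    by (intro infsum_admissible_finite_Un[OF admissible_halves]) auto
  also have "\<dots> = t"
    using F(2) k(1) \<open>finite F\<close> halves_eq_tail[of k] by (simp add: sum.remove)
  finally have "G \<in> binary_reps t"
    by (simp add: binary_reps_def)
  moreover have "F \<in> binary_reps t"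
    using F(2) \<open>finite F\<close> by (simp add: binary_reps_def)
  moreover have "infinite G"
    unfolding G_def using infinite_Ici[of "Suc k"] by simp
  then have "F \<noteq> G"
    using \<open>finite F\<close> by auto
  ultimately have "card {F, G} \<le> card (binary_reps t)"
    by (intro card_mono finite_binary_reps) simp
  then show ?thesis
    using \<open>F \<noteq> G\<close> card_binary_reps_le_2[of t] by simp
qed

lemma card_binary_reps_not_dyadic:
  assumes t01: "0 \<le> t" "t \<le> 1" and not_two: "\<not> (dyadic t \<and> 0 < t \<and> t < 1)"
  shows "card (binary_reps t) = 1"
proof -
  have "F = G" if FG: "F \<in> binary_reps t" "G \<in> binary_reps t" "finite F" for F G
  proof (rule ccontr)
    assume "F \<noteq> G"
    then have "infinite G"
      using binary_reps_finite_iff_infinite[OF FG(1,2)] FG(3) by blast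
    then have "G \<noteq> {}"
      by auto
    then have "0 < t"
      using FG(2) infsum_admissible_pos[OF admissible_halves] by (auto simp: binary_reps_def)
    moreover have "t < 1"
    proof -
      obtain i where "i \<notin> F"
        using FG(3) infinite_UNIV_nat by (metis UNIV_I finite_subset subsetI)
      then show ?thesis
        using FG(1) infsum_admissible_strict_mono[OF admissible_halves, of F UNIV i]
          infsum_halves_UNIV
        by (simp add: binary_reps_def)
    qed
    moreover have "dyadic t"
      using FG(1,3) dyadic_sum_halves[OF FG(3)] by (simp add: binary_reps_def infsum_finite)
    ultimately show False
      using not_two by blast
  qed
  then have unique: "F = G" if "F \<in> binary_reps t" "G \<in> binary_reps t" for F G
    using that binary_reps_finite_iff_infinite by blast
  obtain G where "G \<in> binary_reps t"
    using t01 binary_reps_nonempty_iff by blast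
  then have "binary_reps t = {G}"
    using unique by blast
  then show ?thesis
    by simp
qed

lemma card_binary_reps:
  "card (binary_reps t) =
     (if 0 \<le> t \<and> t \<le> 1 then if dyadic t \<and> 0 < t \<and> t < 1 then 2 else 1 else 0)"
proof -
  have "card (binary_reps t) = 0" if "\<not> (0 \<le> t \<and> t \<le> 1)"
    using that binary_reps_nonempty_iff[of t] by (metis card.empty)
  then show ?thesis
    using card_binary_reps_dyadic card_binary_reps_not_dyadic by auto
qed

lemma card_binary_reps_pos_iff: "0 < card (binary_reps t) \<longleftrightarrow> 0 \<le> t \<and> t \<le> 1"
  by (simp add: card_binary_reps)

lemma card_binary_reps_eq_0: "t < 0 \<Longrightarrow> card (binary_reps t) = 0"
  by (simp add: card_binary_reps)

lemma card_binary_reps_1_or_2: "0 \<le> t \<Longrightarrow> t \<le> 1 \<Longrightarrow> card (binary_reps t) \<in> {1, 2}"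
  by (simp add: card_binary_reps)

section \<open>Sequences with a binary tail\<close>

lemma Int_atLeast_eq_image_add:
  fixes B :: "nat set"
  shows "B \<inter> {m..} = (+) m ` {k. m + k \<in> B}"
proof (intro equalityI subsetI)
  fix x :: nat
  assume "x \<in> B \<inter> {m..}"
  then have "x = m + (x - m)" "m + (x - m) \<in> B"
    by auto
  then show "x \<in> (+) m ` {k. m + k \<in> B}"
    by blast
qed auto

context
  fixes y :: "nat \<Rightarrow> real" and N :: nat and c :: real
  assumes y: "admissible_seq y"
    and tail: "\<And>k. y (Suc N + k) = c * halves k"
    and c: "0 < c"
begin

lemma infsum_split_halves_tail:
  "infsum y B = sum y (B \<inter> {..N}) + c * infsum halves {k. Suc N + k \<in> B}"
proof -
  have "infsum y (B \<inter> {Suc N..}) = infsum (y \<circ> (+) (Suc N)) {k. Suc N + k \<in> B}"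
    unfolding Int_atLeast_eq_image_add by (intro infsum_reindex) (simp add: inj_on_def)
  also have "\<dots> = c * infsum halves {k. Suc N + k \<in> B}"
    using tail by (simp add: o_def infsum_cmult_right')
  finally show ?thesis
    using infsum_admissible_split[OF y, of B "Suc N"] by (simp add: lessThan_Suc_atMost)
qed

lemma bij_betw_representations_halves_tail:
  "bij_betw (\<lambda>B. (B \<inter> {..N}, {k. Suc N + k \<in> B})) {B. infsum y B = z}
     (SIGMA E:Pow {..N}. binary_reps ((z - sum y E) / c))"
proof (rule bij_betw_byWitness[where f' = "\<lambda>(E, G). E \<union> (+) (Suc N) ` G"])
  show "\<forall>B\<in>{B. infsum y B = z}.
      (\<lambda>(E, G). E \<union> (+) (Suc N) ` G) (B \<inter> {..N}, {k. Suc N + k \<in> B}) = B"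
  proof
    fix B
    have "(B \<inter> {..N}) \<union> (B \<inter> {Suc N..}) = B"
      by auto
    then show "(\<lambda>(E, G). E \<union> (+) (Suc N) ` G) (B \<inter> {..N}, {k. Suc N + k \<in> B}) = B"
      by (simp add: Int_atLeast_eq_image_add)
  qed
  show "\<forall>EG\<in>(SIGMA E:Pow {..N}. binary_reps ((z - sum y E) / c)).
      (\<lambda>B. (B \<inter> {..N}, {k. Suc N + k \<in> B})) ((\<lambda>(E, G). E \<union> (+) (Suc N) ` G) EG) = EG"
    by auto
  show "(\<lambda>B. (B \<inter> {..N}, {k. Suc N + k \<in> B})) ` {B. infsum y B = z}
      \<subseteq> (SIGMA E:Pow {..N}. binary_reps ((z - sum y E) / c))"
    using c by (auto simp: binary_reps_def infsum_split_halves_tail field_simps)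
  show "(\<lambda>(E, G). E \<union> (+) (Suc N) ` G) ` (SIGMA E:Pow {..N}. binary_reps ((z - sum y E) / c))
      \<subseteq> {B. infsum y B = z}"
  proof
    fix B
    assume "B \<in> (\<lambda>(E, G). E \<union> (+) (Suc N) ` G) `
      (SIGMA E:Pow {..N}. binary_reps ((z - sum y E) / c))"
    then obtain E G where EG: "E \<subseteq> {..N}" "G \<in> binary_reps ((z - sum y E) / c)"
      and B: "B = E \<union> (+) (Suc N) ` G"
      by auto
    then have "B \<inter> {..N} = E" "{k. Suc N + k \<in> B} = G"
      by auto
    then show "B \<in> {B. infsum y B = z}"
      using EG(2) c by (simp add: infsum_split_halves_tail binary_reps_def)
  qed
qed

lemma card_representations_halves_tail:
  "finite {B. infsum y B = z}"
  "card {B. infsum y B = z} = (\<Sum>E\<in>Pow {..N}. card (binary_reps ((z - sum y E) / c)))"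
proof -
  note bij = bij_betw_representations_halves_tail[of z]
  have "finite (SIGMA E:Pow {..N}. binary_reps ((z - sum y E) / c))"
    by (intro finite_SigmaI) (simp_all add: finite_binary_reps)
  then show "finite {B. infsum y B = z}"
    using bij_betw_finite[OF bij] by simp
  show "card {B. infsum y B = z} = (\<Sum>E\<in>Pow {..N}. card (binary_reps ((z - sum y E) / c)))"
    using bij_betw_same_card[OF bij] by (simp add: card_SigmaI finite_binary_reps)
qed

end

definition example_seq :: "nat \<Rightarrow> real" where
  "example_seq n = (if n < 2 then 2 else halves (n - 2))"

lemma admissible_example_seq: "admissible_seq example_seq"
proof -
  have "(\<lambda>n. example_seq (n + 2)) = halves"
    by (simp add: example_seq_def)
  then have "summable example_seq"
    using admissible_halves summable_iff_shift[of example_seq 2] by (simp add: admissible_seq_def)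
  then show ?thesis
    by (simp add: admissible_seq_def example_seq_def halves_def)
qed

lemma representations_example_seq:
  "finite {B. infsum example_seq B = z}"
  "card {B. infsum example_seq B = z} =
     card (binary_reps z) + 2 * card (binary_reps (z - 2)) + card (binary_reps (z - 4))"
proof -
  have tail: "example_seq (Suc 1 + k) = 1 * halves k" for k
    by (simp add: example_seq_def)
  show "finite {B. infsum example_seq B = z}"
    using card_representations_halves_tail(1)[OF admissible_example_seq tail] by simp
  have "Pow {..1::nat} = {{}, {0}, {1}, {0, 1}}"
    by (auto simp: Pow_insert atMost_Suc)
  then have "(\<Sum>E\<in>Pow {..1}. card (binary_reps ((z - sum example_seq E) / 1))) =
      card (binary_reps z) + 2 * card (binary_reps (z - 2)) + card (binary_reps (z - 4))"
    by (simp add: example_seq_def mult_2)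
  then show "card {B. infsum example_seq B = z} =
      card (binary_reps z) + 2 * card (binary_reps (z - 2)) + card (binary_reps (z - 4))"
    using card_representations_halves_tail(2)[OF admissible_example_seq tail, of z] by simp
qed

lemma achievement_set_example_seq: "achievement_set example_seq = {0..1} \<union> {2..3} \<union> {4..5}"
proof -
  have "z \<in> achievement_set example_seq \<longleftrightarrow> z \<in> {0..1} \<union> {2..3} \<union> {4..5}" for z
  proof -
    have "z \<in> achievement_set example_seq \<longleftrightarrow> {B. infsum example_seq B = z} \<noteq> {}"
      by (auto simp: achievement_set_eq[OF admissible_example_seq])
    also have "\<dots> \<longleftrightarrow> 0 < card {B. infsum example_seq B = z}"
      using representations_example_seq(1)[of z] by (simp add: card_gt_0_iff)
    also have "\<dots> \<longleftrightarrow> z \<in> {0..1} \<union> {2..3} \<union> {4..5}"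
      unfolding representations_example_seq(2) by (auto simp: card_binary_reps_pos_iff)
    finally show ?thesis .
  qed
  then show ?thesis
    by blast
qed

lemma cardinal_function_example_seq:
  "cardinal_function example_seq z = CFin (card {B. infsum example_seq B = z})"
  using representations_example_seq(1)
  by (simp add: cardinal_function_eq[OF admissible_example_seq] cardval_def)

lemma card_representations_example_seq_mem:
  assumes z: "z \<in> {0..1} \<union> {2..3} \<union> {4..5}"
  shows "card {B. infsum example_seq B = z} \<in> {1, 2, 4}"
proof -
  consider "z \<in> {0..1}" | "z \<in> {2..3}" | "z \<in> {4..5}"
    using z by blast
  then show ?thesis
  proof cases
    case 1
    have "card (binary_reps (z - 2)) = 0" "card (binary_reps (z - 4)) = 0"
      using 1 by (auto simp: card_binary_reps)
    then show ?thesis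
      using 1 card_binary_reps_1_or_2[of z] by (auto simp: representations_example_seq(2))
  next
    case 2
    have "card (binary_reps z) = 0" "card (binary_reps (z - 4)) = 0"
      using 2 by (auto simp: card_binary_reps)
    then show ?thesis
      using 2 card_binary_reps_1_or_2[of "z - 2"] by (auto simp: representations_example_seq(2))
  next
    case 3
    have "card (binary_reps z) = 0" "card (binary_reps (z - 2)) = 0"
      using 3 by (auto simp: card_binary_reps)
    then show ?thesis
      using 3 card_binary_reps_1_or_2[of "z - 4"] by (auto simp: representations_example_seq(2))
  qed
qed

lemma cf_range_example_seq: "cf_range example_seq = {CFin 1, CFin 2, CFin 4}"
proof -
  let ?S = "{0..1} \<union> {2..3} \<union> {4..5} :: real set"
  have "cardinal_function example_seq ` ?S \<subseteq> {CFin 1, CFin 2, CFin 4}"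
  proof (rule image_subsetI)
    fix z
    assume "z \<in> ?S"
    then show "cardinal_function example_seq z \<in> {CFin 1, CFin 2, CFin 4}"
      using card_representations_example_seq_mem by (auto simp: cardinal_function_example_seq)
  qed
  moreover have "dyadic (1 / 2)"
    unfolding dyadic_def by (rule exI[of _ 1], rule exI[of _ 1]) simp
  then have attained: "cardinal_function example_seq 0 = CFin 1"
    "cardinal_function example_seq 2 = CFin 2" "cardinal_function example_seq (5 / 2) = CFin 4"
    unfolding cardinal_function_example_seq representations_example_seq(2)
    by (simp_all add: card_binary_reps)
  moreover have "0 \<in> ?S" "2 \<in> ?S" "5 / 2 \<in> ?S"
    by simp_all
  then have "{CFin 1, CFin 2, CFin 4} \<subseteq> cardinal_function example_seq ` ?S"
    unfolding attained[symmetric] by blast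
  ultimately show ?thesis
    unfolding cf_range_def achievement_set_example_seq by blast
qed

lemma in_family_I: "{CFin 1, CFin 2, CFin 4} \<in> family_I"
proof -
  have "finite_union_intervals (achievement_set example_seq)"
    unfolding finite_union_intervals_def achievement_set_example_seq
    by (rule exI[of _ "{(0, 1), (2, 3), (4, 5)}"]) (simp add: Un_assoc)
  then show ?thesis
    unfolding family_I_def using cf_range_example_seq admissible_example_seq by blast
qed

section \<open>Interval achievement sets\<close>

lemma halves_tail_if_kakeya_eq:
  assumes y: "admissible_seq y" and eq: "\<And>n. M \<le> n \<Longrightarrow> y n = infsum y {Suc n..}"
  shows "y (M + k) = infsum y {M..} * halves k"
proof -
  have tail: "infsum y {M + k..} = infsum y {M..} / 2 ^ k" for k
  proof (induction k)
    case (Suc k)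
    have "infsum y {M + k..} = 2 * infsum y {Suc (M + k)..}"
      using infsum_admissible_tail_Suc[OF y, of "M + k"] eq[of "M + k"] by simp
    then show ?case
      using Suc.IH by simp
  qed simp
  show ?thesis
    using eq[of "M + k"] tail[of "Suc k"] by (simp add: halves_def power_divide)
qed

lemma sum_Pow_binary_reps_window:
  fixes y :: "nat \<Rightarrow> real"
  assumes y: "admissible_seq y" and anti: "antimono y" and c: "0 < c"
    and d: "0 < d" "d \<le> y N" and gap: "\<And>i. i \<le> N \<Longrightarrow> y N < y i \<Longrightarrow> y N + d \<le> y i"
    and z: "y N \<le> z" "z < y N + d"
  shows "(\<Sum>E\<in>Pow {..N}. card (binary_reps ((z - sum y E) / c))) =
    card (binary_reps (z / c)) + card {i. i \<le> N \<and> y i = y N} * card (binary_reps ((z - y N) / c))"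
proof -
  define I where "I = {i. i \<le> N \<and> y i = y N}"
  define T where "T = insert {} ((\<lambda>i. {i}) ` I)"
  have "finite I"
    by (simp add: I_def)
  have "z < sum y E" if E: "E \<subseteq> {..N}" "E \<notin> T" for E
  proof -
    obtain i where i: "i \<in> E"
      using E(2) by (auto simp: T_def)
    have ge: "y N \<le> y j" if "j \<in> E" for j
      using that E(1) antimonoD[OF anti] by auto
    show ?thesis
    proof (cases "E = {i}")
      case True
      then have "i \<le> N" "y i \<noteq> y N"
        using E by (auto simp: T_def I_def)
      then show ?thesis
        using True gap[of i] ge[OF i] z by auto
    next
      case False
      then obtain j where j: "j \<in> E" "j \<noteq> i"
        using i by blast
      have "sum y {i, j} \<le> sum y E"
        using i j E(1) admissible_pos[OF y]
        by (intro sum_mono2) (auto intro: finite_subset less_imp_le)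
      then show ?thesis
        using j ge[OF i] ge[OF j(1)] z d by simp
    qed
  qed
  then have empty: "card (binary_reps ((z - sum y E) / c)) = 0" if "E \<in> Pow {..N} - T" for E
    using that c by (intro card_binary_reps_eq_0) (simp add: divide_neg_pos)
  have singletons: "(\<Sum>E\<in>(\<lambda>i. {i}) ` I. card (binary_reps ((z - sum y E) / c))) =
      card I * card (binary_reps ((z - y N) / c))"
    using sum.reindex[of "\<lambda>i. {i}" I "\<lambda>E. card (binary_reps ((z - sum y E) / c))"]
    by (simp add: inj_on_def I_def)
  have "(\<Sum>E\<in>Pow {..N}. card (binary_reps ((z - sum y E) / c))) =
      (\<Sum>E\<in>T. card (binary_reps ((z - sum y E) / c)))"
    using empty by (intro sum.mono_neutral_right) (auto simp: T_def I_def)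
  also have "\<dots> = card (binary_reps (z / c)) + card I * card (binary_reps ((z - y N) / c))"
    unfolding T_def using \<open>finite I\<close> singletons by (subst sum.insert) auto
  finally show ?thesis
    by (simp add: I_def)
qed

lemma binary_reps_window_not_1_2_4:
  assumes t: "0 < t" and \<delta>: "0 < \<delta>" "t + \<delta> \<le> 1" and m: "1 \<le> m"
  obtains s where "0 \<le> s" "s < \<delta>"
    "card (binary_reps (t + s)) + m * card (binary_reps s) \<notin> {1, 2, 4}"
proof (cases "dyadic t")
  case True
  obtain s where s: "0 < s" "s < \<delta>" "\<not> dyadic s"
    using exists_not_dyadic_between[OF \<delta>(1)] by blast
  have "\<not> dyadic (t + s)"
    using dyadic_diff[OF True, of "t + s"] s t by auto
  then have "card (binary_reps (t + s)) + m * card (binary_reps s) = 1 + m"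
    using s t \<delta> by (simp add: card_binary_reps)
  moreover have "card (binary_reps (t + 0)) + m * card (binary_reps 0) = 2 + m"
    using True t \<delta> by (simp add: card_binary_reps)
  ultimately show ?thesis
    using that[of s] that[of 0] s \<delta> m by force
next
  case False
  obtain s where s: "0 < s" "s < \<delta>" "s < 1" "dyadic s"
    using exists_dyadic_between_0[OF \<delta>(1)] by blast
  have "\<not> dyadic (t + s)"
    using dyadic_diff[OF s(4), of "t + s"] False s t by auto
  then have "card (binary_reps (t + s)) + m * card (binary_reps s) = 1 + 2 * m"
    using s t \<delta> by (simp add: card_binary_reps)
  moreover have "1 + 2 * m \<notin> {1, 2, 4}"
    using m by (simp; presburger)
  ultimately show ?thesis
    using that[of s] s by simp
qed

lemma nat_infinitely_often_or_last:
  fixes P :: "nat \<Rightarrow> bool"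
  obtains "\<And>M. \<exists>n\<ge>M. P n" | "\<And>n. \<not> P n" | N where "P N" "\<And>n. N < n \<Longrightarrow> \<not> P n"
proof (cases "finite {n. P n}")
  case True
  show ?thesis
  proof (cases "{n. P n} = {}")
    case False
    then show ?thesis
      using that(3)[of "Max {n. P n}"] True Max_in Max_ge by (metis leD mem_Collect_eq)
  qed (use that(2) in auto)
next
  case False
  then show ?thesis
    using that(1) by (simp add: infinite_nat_iff_unbounded_le)
qed

lemma exists_gap_above:
  fixes y :: "nat \<Rightarrow> real"
  assumes "0 < e"
  obtains d where "0 < d" "d \<le> e" "\<And>i. i \<le> N \<Longrightarrow> y N < y i \<Longrightarrow> y N + d \<le> y i"
proof -
  define D where "D = insert e ((\<lambda>i. y i - y N) ` {i. i \<le> N \<and> y N < y i})"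
  have "finite D"
    by (simp add: D_def)
  have "Min D \<in> D"
    by (rule Min_in) (simp_all add: \<open>finite D\<close> D_def)
  moreover have "\<forall>t\<in>D. 0 < t"
    using assms by (auto simp: D_def)
  ultimately have "0 < Min D"
    by blast
  moreover have "Min D \<le> e"
    by (rule Min_le) (simp_all add: \<open>finite D\<close> D_def)
  moreover have "y N + Min D \<le> y i" if "i \<le> N" "y N < y i" for i
  proof -
    have "y i - y N \<in> D"
      using that by (simp add: D_def)
    then have "Min D \<le> y i - y N"
      by (rule Min_le[OF \<open>finite D\<close>])
    then show ?thesis
      by simp
  qed
  ultimately show ?thesis
    by (rule that)
qed

lemma representations_near_last_strict:
  fixes y :: "nat \<Rightarrow> real"
  assumes y: "admissible_seq y" and anti: "antimono y"
    and strict: "y N < infsum y {Suc N..}"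
    and eq: "\<And>n. N < n \<Longrightarrow> y n = infsum y {Suc n..}"
  defines "c \<equiv> infsum y {Suc N..}"
  obtains \<delta> m where "0 < \<delta>" "1 \<le> m" "y N / c + \<delta> \<le> 1"
    and "\<And>s. 0 \<le> s \<Longrightarrow> s < \<delta> \<Longrightarrow> y N + c * s \<le> infsum y UNIV"
    and "\<And>s. 0 \<le> s \<Longrightarrow> s < \<delta> \<Longrightarrow> finite {B. infsum y B = y N + c * s} \<and>
      card {B. infsum y B = y N + c * s} =
        card (binary_reps (y N / c + s)) + m * card (binary_reps s)"
proof -
  have tail: "y (Suc N + k) = c * halves k" for k
    using halves_tail_if_kakeya_eq[OF y, of "Suc N" k] eq by (simp add: c_def)
  have "0 < y N"
    by (rule admissible_pos[OF y])
  then have c: "0 < c"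
    using strict by (simp add: c_def)
  have "c \<le> infsum y UNIV"
    unfolding c_def by (rule infsum_admissible_mono[OF y]) simp
  define m where "m = card {i. i \<le> N \<and> y i = y N}"
  have "card {N} \<le> m"
    unfolding m_def by (intro card_mono) auto
  then have "1 \<le> m"
    by simp
  have "0 < min (y N) (c - y N)"
    using \<open>0 < y N\<close> strict by (simp add: c_def)
  then obtain d where d: "0 < d" "d \<le> y N" "d \<le> c - y N"
    and gap: "\<And>i. i \<le> N \<Longrightarrow> y N < y i \<Longrightarrow> y N + d \<le> y i"
    by (rule exists_gap_above[where y = y and N = N]) auto
  show ?thesis
  proof
    show "0 < d / c" "1 \<le> m"
      using d(1) c \<open>1 \<le> m\<close> by simp_all
    show "y N / c + d / c \<le> 1"
      using d(3) c by (simp add: add_divide_distrib[symmetric])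
    fix s
    assume "0 \<le> s" "s < d / c"
    then have z: "y N \<le> y N + c * s" "y N + c * s < y N + d"
      using c by (auto simp: field_simps)
    then show "y N + c * s \<le> infsum y UNIV"
      using d(3) \<open>c \<le> infsum y UNIV\<close> by linarith
    have "(y N + c * s) / c = y N / c + s" "(y N + c * s - y N) / c = s"
      using c by (simp_all add: field_simps)
    then show "finite {B. infsum y B = y N + c * s} \<and>
      card {B. infsum y B = y N + c * s} =
        card (binary_reps (y N / c + s)) + m * card (binary_reps s)"
      using card_representations_halves_tail[OF y tail c, of "y N + c * s"]
        sum_Pow_binary_reps_window[OF y anti c d(1,2) gap z]
      by (simp add: m_def)
  qed
qed

lemma last_strict_kakeya_index_not_1_2_4:
  fixes y :: "nat \<Rightarrow> real"
  assumes y: "admissible_seq y" and anti: "antimono y"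
    and strict: "y N < infsum y {Suc N..}"
    and eq: "\<And>n. N < n \<Longrightarrow> y n = infsum y {Suc n..}"
  obtains z where "0 \<le> z" "z \<le> infsum y UNIV"
    "finite {B. infsum y B = z} \<Longrightarrow> card {B. infsum y B = z} \<notin> {1, 2, 4}"
proof -
  let ?c = "infsum y {Suc N..}"
  obtain \<delta> m where \<delta>: "0 < \<delta>" "1 \<le> m" "y N / ?c + \<delta> \<le> 1"
    and window: "\<And>s. 0 \<le> s \<Longrightarrow> s < \<delta> \<Longrightarrow> y N + ?c * s \<le> infsum y UNIV"
      "\<And>s. 0 \<le> s \<Longrightarrow> s < \<delta> \<Longrightarrow> finite {B. infsum y B = y N + ?c * s} \<and>
        card {B. infsum y B = y N + ?c * s} =
          card (binary_reps (y N / ?c + s)) + m * card (binary_reps s)"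
    using representations_near_last_strict[OF y anti strict eq] by blast
  have "0 < y N / ?c"
    using admissible_pos[OF y, of N] strict by simp
  then obtain s where s: "0 \<le> s" "s < \<delta>"
    and "card (binary_reps (y N / ?c + s)) + m * card (binary_reps s) \<notin> {1, 2, 4}"
    using binary_reps_window_not_1_2_4 \<delta> by blast
  moreover have "0 \<le> y N + ?c * s"
    using s admissible_pos[OF y, of N] infsum_admissible_nonneg[OF y] by simp
  ultimately show ?thesis
    using that[of "y N + ?c * s"] window[OF s] by simp
qed

lemma card_representations_le_2_if_kakeya_eq:
  assumes y: "admissible_seq y" and eq: "\<And>n. y n = infsum y {Suc n..}"
  shows "card {B. infsum y B = z} \<le> 2"
proof -
  define S where "S = infsum y UNIV"
  have "0 < S"
    unfolding S_def by (simp add: infsum_admissible_pos[OF y])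
  have "y k = S * halves k" for k
    using halves_tail_if_kakeya_eq[OF y, of 0 k] eq by (simp add: S_def)
  then have "y = (\<lambda>k. S * halves k)"
    by (rule ext)
  then have "{B. infsum y B = z} = binary_reps (z / S)"
    using \<open>0 < S\<close> by (auto simp: binary_reps_def infsum_cmult_right' field_simps)
  then show ?thesis
    using card_binary_reps_le_2 by simp
qed

lemma antimono_cf_range_ne_1_2_4:
  assumes y: "admissible_seq y" and anti: "antimono y" and interval: "achievement_set y = {a..b}"
  shows "cf_range y \<noteq> {CFin 1, CFin 2, CFin 4}"
proof
  assume range: "cf_range y = {CFin 1, CFin 2, CFin 4}"
  have "a = 0" "b = infsum y UNIV"
    by (rule achievement_set_eq_Icc_imp[OF y interval])+
  then have ach: "achievement_set y = {0..infsum y UNIV}"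
    using interval by simp
  have vals: "finite {B. infsum y B = z} \<and> card {B. infsum y B = z} \<in> {1, 2, 4}"
    if "0 \<le> z" "z \<le> infsum y UNIV" for z
    using that range ach by (intro cf_range_subset_CFin_imp[OF y]) auto
  have kakeya: "y n \<le> infsum y {Suc n..}" for n
    by (rule kakeya_condition[OF y anti ach])
  consider "\<And>M. \<exists>n\<ge>M. y n < infsum y {Suc n..}" | "\<And>n. \<not> y n < infsum y {Suc n..}"
    | N where "y N < infsum y {Suc N..}" "\<And>n. N < n \<Longrightarrow> \<not> y n < infsum y {Suc n..}"
    by (rule nat_infinitely_often_or_last[of "\<lambda>n. y n < infsum y {Suc n..}"]) blast+
  then show False
  proof cases
    case 1
    then obtain z where "0 \<le> z" "z \<le> infsum y UNIV"
      "finite {B. infsum y B = z} \<longrightarrow> 4 < card {B. infsum y B = z}"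
      using many_representations[OF y kakeya] by blast
    then show False
      using vals by fastforce
  next
    case 2
    then have "y n = infsum y {Suc n..}" for n
      using kakeya[of n] by (meson not_less order.antisym)
    moreover have "CFin 4 \<in> cardinal_function y ` achievement_set y"
      using range by (simp add: cf_range_def)
    then obtain z where "cardinal_function y z = CFin 4"
      by (metis imageE)
    ultimately show False
      using card_representations_le_2_if_kakeya_eq[OF y, of z]
      by (simp add: cardinal_function_eq[OF y] cardval_eq_CFin)
  next
    case 3
    then have "\<And>n. N < n \<Longrightarrow> y n = infsum y {Suc n..}"
      using kakeya by (meson not_less order.antisym)
    then show False
      using last_strict_kakeya_index_not_1_2_4[OF y anti 3(1)] vals by metis
  qed
qed

lemma not_in_family_I1: "{CFin 1, CFin 2, CFin 4} \<notin> family_I1"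
proof
  assume "{CFin 1, CFin 2, CFin 4} \<in> family_I1"
  then obtain x a b where x: "admissible_seq x" "achievement_set x = {a..b}"
    and range: "cf_range x = {CFin 1, CFin 2, CFin 4}"
    by (auto simp: family_I1_def)
  have "\<And>n. 0 < x n" "x \<longlonglongrightarrow> 0"
    using x(1) by (simp_all add: admissible_seq_def summable_LIMSEQ_zero)
  then obtain \<sigma> :: "nat \<Rightarrow> nat" where \<sigma>: "bij \<sigma>" "antimono (x \<circ> \<sigma>)"
    by (rule decreasing_rearrangement)
  have "achievement_set (x \<circ> \<sigma>) = {a..b}"
    using x \<sigma>(1) by (simp add: achievement_set_reindex)
  then have "cf_range (x \<circ> \<sigma>) \<noteq> {CFin 1, CFin 2, CFin 4}"
    by (rule antimono_cf_range_ne_1_2_4[OF admissible_seq_reindex[OF x(1) \<sigma>(1)] \<sigma>(2)])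
  moreover have "cf_range (x \<circ> \<sigma>) = cf_range x"
    using x(1) \<sigma>(1) by (simp add: cf_range_def achievement_set_reindex cardinal_function_reindex)
  ultimately show False
    using range by simp
qed

theorem theorem6p9:
  shows "{CFin 1, CFin 2, CFin 4} \<in> family_I - family_I1"
  using in_family_I not_in_family_I1 by blast

end
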